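(* Suppose $\sigma$ is an automorphism of $D$ and $a\in D$. Then $f(t)=t^4-a\in D[t;\sigma]$ is reducible if and only if there exist $c,d\in D$ with $$\sigma^2(c)\sigma(c)c+\sigma^2(d)c+\sigma^2(c)\sigma(d)=0\quad\text{and}\quad \sigma^2(d)d+\sigma^2(c)\sigma(c)d=a.$$
   Context: $D$ is an associative division ring, $\sigma$ a ring automorphism of $D$, and $D[t;\sigma]$ the skew polynomial ring with $ta=\sigma(a)t$. $f$ is reducible if it can be written $f=gh$ with $\deg g,\deg h<\deg f$. *)

theory Defs
  imports "HOL-Computational_Algebra.Polynomial"
begin

definition ring_automorphism :: "('a::division_ring \<Rightarrow> 'a) \<Rightarrow> bool" where
  "ring_automorphism \<sigma> \<longleftrightarrow> bij \<sigma> \<and> (\<forall>x y. \<sigma> (x + y) = \<sigma> x + \<sigma> y)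
     \<and> (\<forall>x y. \<sigma> (x * y) = \<sigma> x * \<sigma> y) \<and> \<sigma> 1 = 1"

text \<open>Skew polynomials in D[t;sigma] are represented by their coefficient lists
  (type 'a poly, coefficient i is the coefficient of t^i, written on the left).
  Multiplication follows t b = sigma(b) t, i.e.
  (a t^i)(b t^j) = a sigma^i(b) t^(i+j).\<close>
definition skew_mult :: "('a::division_ring \<Rightarrow> 'a) \<Rightarrow> 'a poly \<Rightarrow> 'a poly \<Rightarrow> 'a poly" where
  "skew_mult \<sigma> p q =
     (\<Sum>i\<le>degree p. \<Sum>j\<le>degree q. monom (coeff p i * (\<sigma> ^^ i) (coeff q j)) (i + j))"

definition skew_reducible :: "('a::division_ring \<Rightarrow> 'a) \<Rightarrow> 'a poly \<Rightarrow> bool" where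
  "skew_reducible \<sigma> f \<longleftrightarrow>
     (\<exists>g h. degree g < degree f \<and> degree h < degree f \<and> f = skew_mult \<sigma> g h)"

end

theory Submission
  imports Defs
begin

(* In D[t;sigma] the degree of a product is the sum of the degrees, so a proper factorisation
   g h of t^4 - a has degrees (1,3), (2,2) or (3,1).  Comparing coefficients in each case yields
   a monic quadratic right factor t^2 - c t - d: in case (2,2) it is h made monic, in case (3,1)
   a right factor t - b gives t^2 - sigma(b) b, and in case (1,3) the coefficients of h satisfy
   sigma(h_i) = k h_(i+1), which makes t^2 - h_2^-1 h_0 a right factor.  Conversely, if c and d
   satisfy the two equations of the theorem, then
   t^4 - a = (t^2 + sigma^2(c) t + sigma^2(d) + sigma^2(c) sigma(c)) (t^2 - c t - d). *)

lemma quartic_binomial_eq: "monom 1 4 - [:a:] = [:- a, 0, 0, 0, 1::'a::ring_1:]"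
  by (auto intro!: poly_eqI simp: coeff_monom coeff_pCons split: nat.split)

lemma poly_eq_cubic:
  assumes "degree p \<le> 3"
  shows "p = [:coeff p 0, coeff p 1, coeff p 2, coeff p 3:]"
  using assms by (intro poly_eqI) (auto simp: coeff_pCons coeff_eq_0 numeral_eq_Suc split: nat.split)

locale skew_poly_ring =
  fixes \<sigma> :: "'a::division_ring \<Rightarrow> 'a"
  assumes ring_automorphism: "ring_automorphism \<sigma>"
begin

lemma aut_add: "\<sigma> (x + y) = \<sigma> x + \<sigma> y"
  and aut_mult: "\<sigma> (x * y) = \<sigma> x * \<sigma> y"
  and aut_one [simp]: "\<sigma> 1 = 1"
  and inj_aut: "inj \<sigma>"
  using ring_automorphism unfolding ring_automorphism_def bij_def by auto

lemma aut_zero [simp]: "\<sigma> 0 = 0"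
  using aut_add[of 0 0] by simp

lemma aut_minus [simp]: "\<sigma> (- x) = - \<sigma> x"
  using aut_add[of x "- x"] by (simp add: add_eq_0_iff2)

lemma aut_eq_0_iff [simp]: "\<sigma> x = 0 \<longleftrightarrow> x = 0"
  using inj_aut aut_zero by (metis injD)

lemma aut_inverse [simp]: "\<sigma> (inverse x) = inverse (\<sigma> x)"
proof (cases "x = 0")
  case False
  then have "\<sigma> x * \<sigma> (inverse x) = 1"
    by (simp flip: aut_mult)
  then show ?thesis
    by (metis inverse_unique)
qed simp

lemma funpow_aut_eq_0_iff [simp]: "(\<sigma> ^^ n) x = 0 \<longleftrightarrow> x = 0"
  by (induction n) auto

lemma funpow_aut_zero [simp]: "(\<sigma> ^^ n) 0 = 0"
  by simp

lemma coeff_skew_mult: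
  assumes "degree p \<le> m" "degree q \<le> n"
  shows "coeff (skew_mult \<sigma> p q) k =
    (\<Sum>i\<le>m. \<Sum>j\<le>n. if i + j = k then coeff p i * (\<sigma> ^^ i) (coeff q j) else 0)"
proof -
  have "skew_mult \<sigma> p q = (\<Sum>i\<le>m. \<Sum>j\<le>degree q. monom (coeff p i * (\<sigma> ^^ i) (coeff q j)) (i + j))"
    unfolding skew_mult_def
    by (rule sum.mono_neutral_left) (use assms in \<open>auto simp: coeff_eq_0\<close>)
  also have "\<dots> = (\<Sum>i\<le>m. \<Sum>j\<le>n. monom (coeff p i * (\<sigma> ^^ i) (coeff q j)) (i + j))"
    by (intro sum.cong refl sum.mono_neutral_left) (use assms in \<open>auto simp: coeff_eq_0\<close>)
  finally show ?thesis
    by (simp add: coeff_sum)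
qed

lemma skew_mult_cubic:
  "skew_mult \<sigma> [:g0, g1, g2, g3:] [:h0, h1, h2, h3:] =
    [:g0 * h0,
      g0 * h1 + g1 * \<sigma> h0,
      g0 * h2 + g1 * \<sigma> h1 + g2 * \<sigma> (\<sigma> h0),
      g0 * h3 + g1 * \<sigma> h2 + g2 * \<sigma> (\<sigma> h1) + g3 * \<sigma> (\<sigma> (\<sigma> h0)),
      g1 * \<sigma> h3 + g2 * \<sigma> (\<sigma> h2) + g3 * \<sigma> (\<sigma> (\<sigma> h1)),
      g2 * \<sigma> (\<sigma> h3) + g3 * \<sigma> (\<sigma> (\<sigma> h2)),
      g3 * \<sigma> (\<sigma> (\<sigma> h3)):]"
proof (rule poly_eqI, goal_cases)
  case (1 k)
  have deg: "degree [:x0, x1, x2, x3:] \<le> 3" for x0 x1 x2 x3 :: 'a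
    by (simp add: degree_pCons_le)
  consider "k = 0" | "k = 1" | "k = 2" | "k = 3" | "k = 4" | "k = 5" | "k = 6" | k' where "k = k' + 7"
    by atomize_elim presburger
  then show ?case
    by cases (simp_all add: coeff_skew_mult[OF deg deg] numeral_eq_Suc atMost_Suc algebra_simps)
qed

lemma coeff_skew_mult_degree_sum:
  "coeff (skew_mult \<sigma> p q) (degree p + degree q) = lead_coeff p * (\<sigma> ^^ degree p) (lead_coeff q)"
proof -
  let ?I = "{..degree p} \<times> {..degree q}"
  have "coeff (skew_mult \<sigma> p q) (degree p + degree q) =
      (\<Sum>(i, j)\<in>?I. if i + j = degree p + degree q then coeff p i * (\<sigma> ^^ i) (coeff q j) else 0)"
    by (simp add: coeff_skew_mult[OF order.refl order.refl] sum.cartesian_product)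
  also have "\<dots> = (\<Sum>(i, j)\<in>{(degree p, degree q)}. coeff p i * (\<sigma> ^^ i) (coeff q j))"
    by (rule sum.mono_neutral_cong_right) (auto split: if_splits)
  finally show ?thesis by simp
qed

lemma degree_skew_mult:
  assumes "p \<noteq> 0" "q \<noteq> 0"
  shows "degree (skew_mult \<sigma> p q) = degree p + degree q"
proof (rule antisym)
  show "degree (skew_mult \<sigma> p q) \<le> degree p + degree q"
    by (rule degree_le) (auto simp: coeff_skew_mult[OF order.refl order.refl])
  show "degree p + degree q \<le> degree (skew_mult \<sigma> p q)"
    by (rule le_degree) (simp add: coeff_skew_mult_degree_sum assms)
qed

lemma skew_mult_0_left [simp]: "skew_mult \<sigma> 0 q = 0"
  by (simp add: skew_mult_def)

lemma skew_mult_0_right [simp]: "skew_mult \<sigma> p 0 = 0"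
  by (simp add: skew_mult_def)

text \<open>The equations saying that \<open>t\<^sup>2 - c t - d\<close> is a right factor of \<open>t\<^sup>4 - a\<close>.\<close>

definition quadratic_right_factor_eqs :: "'a \<Rightarrow> 'a \<Rightarrow> 'a \<Rightarrow> bool" where
  "quadratic_right_factor_eqs a c d \<longleftrightarrow>
     \<sigma> (\<sigma> c) * \<sigma> c * c + \<sigma> (\<sigma> d) * c + \<sigma> (\<sigma> c) * \<sigma> d = 0
     \<and> \<sigma> (\<sigma> d) * d + \<sigma> (\<sigma> c) * \<sigma> c * d = a"

lemma quadratic_right_factor_eqs_0_iff [simp]:
  "quadratic_right_factor_eqs a 0 d \<longleftrightarrow> \<sigma> (\<sigma> d) * d = a"
  by (simp add: quadratic_right_factor_eqs_def)

lemma skew_mult_quadratic_right_factor: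
  assumes "quadratic_right_factor_eqs a c d"
  shows "skew_mult \<sigma> [:\<sigma> (\<sigma> d) + \<sigma> (\<sigma> c) * \<sigma> c, \<sigma> (\<sigma> c), 1:] [:- d, - c, 1:] =
    monom 1 4 - [:a:]"
proof -
  have "skew_mult \<sigma> [:\<sigma> (\<sigma> d) + \<sigma> (\<sigma> c) * \<sigma> c, \<sigma> (\<sigma> c), 1:] [:- d, - c, 1:] =
    [:- (\<sigma> (\<sigma> d) * d + \<sigma> (\<sigma> c) * \<sigma> c * d),
      - (\<sigma> (\<sigma> c) * \<sigma> c * c + \<sigma> (\<sigma> d) * c + \<sigma> (\<sigma> c) * \<sigma> d), 0, 0, 1:]"
    using skew_mult_cubic[of _ _ 1 0 "- d" "- c" 1 0] by (simp add: aut_add aut_mult algebra_simps)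
  with assms show ?thesis
    by (simp add: quadratic_right_factor_eqs_def quartic_binomial_eq)
qed

lemma reducible_if_quadratic_right_factor_eqs:
  assumes "quadratic_right_factor_eqs a c d"
  shows "skew_reducible \<sigma> (monom 1 4 - [:a:])"
proof -
  let ?g = "[:\<sigma> (\<sigma> d) + \<sigma> (\<sigma> c) * \<sigma> c, \<sigma> (\<sigma> c), 1:]" and ?h = "[:- d, - c, 1:]"
  have "degree (monom 1 4 - [:a:]) = 4"
    by (simp add: quartic_binomial_eq)
  with skew_mult_quadratic_right_factor[OF assms] show ?thesis
    unfolding skew_reducible_def by (intro exI[of _ ?g] exI[of _ ?h]) auto
qed

lemma quadratic_right_factor_eqs_of_quadratic_factors:
  assumes prod: "skew_mult \<sigma> [:g0, g1, g2:] [:h0, h1, h2:] = monom 1 4 - [:a:]"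
    and "h2 \<noteq> 0"
  shows "\<exists>c d. quadratic_right_factor_eqs a c d"
proof -
  from prod have E0: "g0 * h0 = - a"
    and E1: "g0 * h1 + g1 * \<sigma> h0 = 0"
    and E2: "g0 * h2 + g1 * \<sigma> h1 + g2 * \<sigma> (\<sigma> h0) = 0"
    and E3: "g1 * \<sigma> h2 + g2 * \<sigma> (\<sigma> h1) = 0"
    and E4: "g2 * \<sigma> (\<sigma> h2) = 1"
    using skew_mult_cubic[of g0 g1 g2 0 h0 h1 h2 0] by (simp_all add: quartic_binomial_eq)
  define c where "c = - (inverse h2 * h1)"
  define d where "d = - (inverse h2 * h0)"
  have h1: "h1 = - (h2 * c)" and h0: "h0 = - (h2 * d)"
    using \<open>h2 \<noteq> 0\<close> by (simp_all add: c_def d_def flip: mult.assoc)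
  have G1: "g1 * \<sigma> h2 = \<sigma> (\<sigma> c)"
    using E3 by (simp add: h1 aut_mult E4 add_eq_0_iff2 flip: mult.assoc)
  have G0: "g0 * h2 = \<sigma> (\<sigma> c) * \<sigma> c + \<sigma> (\<sigma> d)"
    using E2 by (simp add: h1 h0 aut_mult E4 G1 add_eq_0_iff2 diff_eq_eq add.commute flip: mult.assoc)
  have "g0 * h1 + g1 * \<sigma> h0 = - (\<sigma> (\<sigma> c) * \<sigma> c * c + \<sigma> (\<sigma> d) * c + \<sigma> (\<sigma> c) * \<sigma> d)"
    by (simp add: h1 h0 aut_mult G0 G1 distrib_right flip: mult.assoc)
  with E1 have eq1: "\<sigma> (\<sigma> c) * \<sigma> c * c + \<sigma> (\<sigma> d) * c + \<sigma> (\<sigma> c) * \<sigma> d = 0"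
    by (metis neg_equal_0_iff_equal)
  have "g0 * h0 = - (\<sigma> (\<sigma> d) * d + \<sigma> (\<sigma> c) * \<sigma> c * d)"
    by (simp add: h0 G0 distrib_right add.commute flip: mult.assoc)
  with E0 have eq2: "\<sigma> (\<sigma> d) * d + \<sigma> (\<sigma> c) * \<sigma> c * d = a"
    by (metis neg_equal_iff_equal)
  from eq1 eq2 show ?thesis
    unfolding quadratic_right_factor_eqs_def by blast
qed

lemma quadratic_right_factor_eqs_of_linear_left_factor:
  assumes prod: "skew_mult \<sigma> [:g0, g1:] [:h0, h1, h2, h3:] = monom 1 4 - [:a:]"
    and "a \<noteq> 0"
  shows "\<exists>c d. quadratic_right_factor_eqs a c d"
proof -
  from prod have E0: "g0 * h0 = - a"
    and E1: "g0 * h1 + g1 * \<sigma> h0 = 0"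
    and E2: "g0 * h2 + g1 * \<sigma> h1 = 0"
    and E3: "g0 * h3 + g1 * \<sigma> h2 = 0"
    and E4: "g1 * \<sigma> h3 = 1"
    using skew_mult_cubic[of g0 g1 0 0 h0 h1 h2 h3] by (simp_all add: quartic_binomial_eq)
  have "g1 \<noteq> 0" "h3 \<noteq> 0"
    using E4 by auto
  define k where "k = - (inverse g1 * g0)"
  have "k \<noteq> 0"
    using E0 \<open>a \<noteq> 0\<close> \<open>g1 \<noteq> 0\<close> by (auto simp: k_def)
  have shift: "\<sigma> x = k * y" if "g0 * y + g1 * \<sigma> x = 0" for x y
  proof -
    have "\<sigma> x = inverse g1 * (g1 * \<sigma> x)"
      using \<open>g1 \<noteq> 0\<close> by (simp flip: mult.assoc)
    also have "\<dots> = k * y"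
      using that by (simp add: k_def add_eq_0_iff mult.assoc)
    finally show ?thesis .
  qed
  have \<sigma>h0: "\<sigma> h0 = k * h1" and \<sigma>h1: "\<sigma> h1 = k * h2" and \<sigma>h2: "\<sigma> h2 = k * h3"
    using shift E1 E2 E3 by blast+
  have \<sigma>h3: "\<sigma> h3 = inverse g1"
    using E4 by (metis inverse_unique)
  have "h2 \<noteq> 0"
    using \<sigma>h2 \<open>k \<noteq> 0\<close> \<open>h3 \<noteq> 0\<close> by auto
  define d where "d = inverse h2 * h0"
  have cancel: "inverse (\<sigma> k) * (\<sigma> k * z) = z" for z
    using \<open>k \<noteq> 0\<close> by (simp flip: mult.assoc)
  have "\<sigma> (\<sigma> d) = g1 * k * h2"
    using \<open>g1 \<noteq> 0\<close> \<open>k \<noteq> 0\<close>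
    by (simp add: d_def aut_mult \<sigma>h0 \<sigma>h1 \<sigma>h2 \<sigma>h3 nonzero_inverse_mult_distrib mult.assoc cancel)
  then have "\<sigma> (\<sigma> d) * d = g1 * k * (h2 * inverse h2 * h0)"
    by (simp add: d_def mult.assoc)
  also have "\<dots> = - (g0 * h0)"
    using \<open>g1 \<noteq> 0\<close> \<open>h2 \<noteq> 0\<close> by (simp add: k_def flip: mult.assoc)
  finally have "\<sigma> (\<sigma> d) * d = - (g0 * h0)" .
  with E0 have "quadratic_right_factor_eqs a 0 d"
    by simp
  then show ?thesis
    by blast
qed

lemma quadratic_right_factor_eqs_of_linear_right_factor:
  assumes prod: "skew_mult \<sigma> [:g0, g1, g2, g3:] [:h0, h1:] = monom 1 4 - [:a:]"
    and "h1 \<noteq> 0"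
  shows "\<exists>c d. quadratic_right_factor_eqs a c d"
proof -
  from prod have E0: "g0 * h0 = - a"
    and E1: "g0 * h1 + g1 * \<sigma> h0 = 0"
    and E2: "g1 * \<sigma> h1 + g2 * \<sigma> (\<sigma> h0) = 0"
    and E3: "g2 * \<sigma> (\<sigma> h1) + g3 * \<sigma> (\<sigma> (\<sigma> h0)) = 0"
    and E4: "g3 * \<sigma> (\<sigma> (\<sigma> h1)) = 1"
    using skew_mult_cubic[of g0 g1 g2 g3 h0 h1 0 0] by (simp_all add: quartic_binomial_eq)
  define b where "b = - (inverse h1 * h0)"
  have h0: "h0 = - (h1 * b)"
    using \<open>h1 \<noteq> 0\<close> by (simp add: b_def flip: mult.assoc)
  have G2: "g2 * \<sigma> (\<sigma> h1) = \<sigma> (\<sigma> (\<sigma> b))"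
    using E3 by (simp add: h0 aut_mult E4 add_eq_0_iff2 flip: mult.assoc)
  have G1: "g1 * \<sigma> h1 = \<sigma> (\<sigma> (\<sigma> b)) * \<sigma> (\<sigma> b)"
    using E2 by (simp add: h0 aut_mult G2 add_eq_0_iff2 flip: mult.assoc)
  have G0: "g0 * h1 = \<sigma> (\<sigma> (\<sigma> b)) * \<sigma> (\<sigma> b) * \<sigma> b"
    using E1 by (simp add: h0 aut_mult G1 add_eq_0_iff2 flip: mult.assoc)
  have "\<sigma> (\<sigma> (\<sigma> b * b)) * (\<sigma> b * b) = - (g0 * h0)"
    by (simp add: h0 aut_mult G0 flip: mult.assoc)
  with E0 have "quadratic_right_factor_eqs a 0 (\<sigma> b * b)"
    by simp
  then show ?thesis
    by blast
qed

lemma quadratic_right_factor_eqs_if_reducible: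
  assumes "skew_reducible \<sigma> (monom 1 4 - [:a:])"
  shows "\<exists>c d. quadratic_right_factor_eqs a c d"
proof (cases "a = 0")
  case True
  then have "quadratic_right_factor_eqs a 0 0"
    by simp
  then show ?thesis
    by blast
next
  case False
  have deg_f: "degree (monom 1 4 - [:a:]) = 4"
    by (simp add: quartic_binomial_eq)
  from assms obtain g h where "degree g < 4" "degree h < 4"
    and prod: "skew_mult \<sigma> g h = monom 1 4 - [:a:]"
    unfolding skew_reducible_def deg_f by metis
  then have g: "g = [:coeff g 0, coeff g 1, coeff g 2, coeff g 3:]"
    and h: "h = [:coeff h 0, coeff h 1, coeff h 2, coeff h 3:]"
    using poly_eq_cubic[of g] poly_eq_cubic[of h] by simp_all
  have "g \<noteq> 0" "h \<noteq> 0"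
    using prod deg_f by auto
  then have "degree g + degree h = 4"
    using prod deg_f degree_skew_mult by metis
  then consider "degree g = 1" "degree h = 3" | "degree g = 2" "degree h = 2"
    | "degree g = 3" "degree h = 1"
    using \<open>degree g < 4\<close> \<open>degree h < 4\<close> by linarith
  then show ?thesis
  proof cases
    case 1
    then have "skew_mult \<sigma> [:coeff g 0, coeff g 1:] [:coeff h 0, coeff h 1, coeff h 2, coeff h 3:] =
        monom 1 4 - [:a:]"
      using prod g h by (simp add: coeff_eq_0)
    then show ?thesis
      using quadratic_right_factor_eqs_of_linear_left_factor False by blast
  next
    case 2
    then have "skew_mult \<sigma> [:coeff g 0, coeff g 1, coeff g 2:] [:coeff h 0, coeff h 1, coeff h 2:] =
        monom 1 4 - [:a:]"
      using prod g h by (simp add: coeff_eq_0)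
    moreover have "coeff h 2 \<noteq> 0"
      using \<open>h \<noteq> 0\<close> 2 by (metis leading_coeff_0_iff)
    ultimately show ?thesis
      using quadratic_right_factor_eqs_of_quadratic_factors by blast
  next
    case 3
    then have "skew_mult \<sigma> [:coeff g 0, coeff g 1, coeff g 2, coeff g 3:] [:coeff h 0, coeff h 1:] =
        monom 1 4 - [:a:]"
      using prod g h by (simp add: coeff_eq_0)
    moreover have "coeff h 1 \<noteq> 0"
      using \<open>h \<noteq> 0\<close> 3 by (metis leading_coeff_0_iff)
    ultimately show ?thesis
      using quadratic_right_factor_eqs_of_linear_right_factor by blast
  qed
qed

end

theorem mainTheorem16:
  fixes \<sigma> :: "'a::division_ring \<Rightarrow> 'a" and a :: 'a
  assumes "ring_automorphism \<sigma>"
  shows "skew_reducible \<sigma> (monom 1 4 - [:a:]) \<longleftrightarrow>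
    (\<exists>c d. \<sigma> (\<sigma> c) * \<sigma> c * c + \<sigma> (\<sigma> d) * c + \<sigma> (\<sigma> c) * \<sigma> d = 0
         \<and> \<sigma> (\<sigma> d) * d + \<sigma> (\<sigma> c) * \<sigma> c * d = a)"
proof -
  interpret skew_poly_ring \<sigma>
    using assms by unfold_locales
  show ?thesis
    using reducible_if_quadratic_right_factor_eqs quadratic_right_factor_eqs_if_reducible
    unfolding quadratic_right_factor_eqs_def by blast
qed

end
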